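(* Let $(V,\cdot)$ be a nondegenerate intersection pairing of odd type that is not positive definite. Then there exists $u\in V$ with $u\cdot u=-n<0$ such that $u$ is ordinary (indeed $u\in 2V$) and $n-1$ is not of the form $4^a(8b+7)$ for nonnegative integers $a,b$.
   Context: An intersection pairing is a finitely generated free abelian group $V$ with a symmetric bilinear form $V\times V\to\mathbf{Z}$, $(u,w)\mapsto u\cdot w$; nondegenerate means the adjoint $V\to\mathrm{Hom}(V,\mathbf{Z})$ has nonzero determinant. It has odd type if $w\cdot w$ is odd for some $w\in V$. Positive definite means $u\cdot u>0$ for all $u\neq 0$. An element $v\in V$ is characteristic if $v\cdot w\equiv w\cdot w \pmod 2$ for all $w\in V$, and ordinary otherwise. *)

theory Defs
  imports "HOL-Analysis.Analysis"
begin

text \<open>An intersection pairing on the free abelian group V = Z^n (n = CARD('n) \<ge> 1,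
  a basis being fixed): a symmetric Z-bilinear form.\<close>

definition intersection_pairing :: "(int^'n \<Rightarrow> int^'n \<Rightarrow> int) \<Rightarrow> bool" where
  "intersection_pairing B \<longleftrightarrow>
     (\<forall>u w. B u w = B w u) \<and>
     (\<forall>u v w. B (u + v) w = B u w + B v w) \<and>
     (\<forall>c u w. B (c *s u) w = c * B u w)"

text \<open>Matrix of the adjoint V \<rightarrow> Hom(V,Z) w.r.t. the standard basis and its dual.\<close>
definition gram_matrix :: "(int^'n \<Rightarrow> int^'n \<Rightarrow> int) \<Rightarrow> int^'n^'n" where
  "gram_matrix B = (\<chi> i j. B (axis i 1) (axis j 1))"

definition nondegenerate :: "(int^'n \<Rightarrow> int^'n \<Rightarrow> int) \<Rightarrow> bool" where
  "nondegenerate B \<longleftrightarrow> det (gram_matrix B) \<noteq> 0"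

definition odd_type :: "(int^'n \<Rightarrow> int^'n \<Rightarrow> int) \<Rightarrow> bool" where
  "odd_type B \<longleftrightarrow> (\<exists>w. odd (B w w))"

definition positive_definite :: "(int^'n \<Rightarrow> int^'n \<Rightarrow> int) \<Rightarrow> bool" where
  "positive_definite B \<longleftrightarrow> (\<forall>u. u \<noteq> 0 \<longrightarrow> B u u > 0)"

definition characteristic :: "(int^'n \<Rightarrow> int^'n \<Rightarrow> int) \<Rightarrow> int^'n \<Rightarrow> bool" where
  "characteristic B v \<longleftrightarrow> (\<forall>w. B v w mod 2 = B w w mod 2)"

definition ordinary :: "(int^'n \<Rightarrow> int^'n \<Rightarrow> int) \<Rightarrow> int^'n \<Rightarrow> bool" where
  "ordinary B v \<longleftrightarrow> \<not> characteristic B v"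

end

theory Submission
  imports Defs
begin

text \<open>Nondegeneracy means the radical is trivial, so an isotropic vector pairs nontrivially
  with some y and a suitable multiple of it plus y has negative square. Adding a large even
  multiple of a negative vector v to a vector x of odd square keeps the square odd and makes it
  negative; this gives w with w \<cdot> w odd and negative. Then u = 2w has u \<cdot> u = -n with
  n = -4 (w \<cdot> w), so n - 1 \<equiv> 3 (mod 8), which is never of the form 4^a(8b+7); and u is
  ordinary because u \<cdot> x is even while x \<cdot> x is odd.\<close>

lemma intersection_pairing_sym:
  "intersection_pairing B \<Longrightarrow> B u w = B w u"
  unfolding intersection_pairing_def by blast

lemma intersection_pairing_add_left:
  "intersection_pairing B \<Longrightarrow> B (u + v) w = B u w + B v w"
  unfolding intersection_pairing_def by blast

lemma intersection_pairing_scale_left: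
  "intersection_pairing B \<Longrightarrow> B (c *s u) w = c * B u w"
  unfolding intersection_pairing_def by blast

lemma intersection_pairing_add_right:
  "intersection_pairing B \<Longrightarrow> B w (u + v) = B w u + B w v"
  by (metis intersection_pairing_sym intersection_pairing_add_left)

lemma intersection_pairing_scale_right:
  "intersection_pairing B \<Longrightarrow> B w (c *s u) = c * B w u"
  by (metis intersection_pairing_sym intersection_pairing_scale_left)

lemma intersection_pairing_sum_left:
  assumes "intersection_pairing B" and "finite S"
  shows "B (\<Sum>i\<in>S. f i) w = (\<Sum>i\<in>S. B (f i) w)"
  using assms(2)
proof (induction S rule: finite_induct)
  case empty
  show ?case
    using intersection_pairing_scale_left[OF assms(1), of 0 0 w] by simp
next
  case (insert i S)
  then show ?case
    by (simp add: intersection_pairing_add_left[OF assms(1)])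
qed

lemma intersection_pairing_square_expand:
  assumes "intersection_pairing B"
  shows "B (a *s v + y) (a *s v + y) = a\<^sup>2 * B v v + 2 * a * B v y + B y y"
  using assms
  by (simp add: intersection_pairing_add_left intersection_pairing_add_right
      intersection_pairing_scale_left intersection_pairing_scale_right
      intersection_pairing_sym[of B y v] power2_eq_square algebra_simps)

lemma intersection_pairing_axis_eq_gram:
  assumes "intersection_pairing B"
  shows "B v (axis j 1) = (gram_matrix B *v v) $ j"
proof -
  have "B v (axis j 1) = B (\<Sum>i\<in>UNIV. v $ i *s axis i 1) (axis j 1)"
    by (simp add: basis_expansion)
  also have "\<dots> = (\<Sum>i\<in>UNIV. B (axis j 1) (axis i 1) * v $ i)"
    using assms
    by (simp add: intersection_pairing_sum_left intersection_pairing_scale_left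
        intersection_pairing_sym[of B _ "axis j 1"] mult.commute)
  finally show ?thesis
    by (simp add: gram_matrix_def matrix_vector_mult_def)
qed

lemma det_map_matrix_of_int:
  fixes G :: "int^'n^'n"
  shows "det (map_matrix of_int G :: 'a::comm_ring_1^'n^'n) = of_int (det G)"
  unfolding det_def by (simp add: of_int_sum of_int_prod)

lemma int_matrix_kernel_trivial:
  fixes G :: "int^'n^'n"
  assumes "det G \<noteq> 0" and "G *v x = 0"
  shows "x = 0"
proof -
  define Gr :: "real^'n^'n" where "Gr = map_matrix of_int G"
  define xr :: "real^'n" where "xr = (\<chi> i. of_int (x $ i))"
  have "det Gr \<noteq> 0"
    using assms(1) by (simp add: Gr_def det_map_matrix_of_int)
  then have "\<exists>H. H ** Gr = mat 1"
    using invertible_det_nz invertible_def by blast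
  moreover have "Gr *v xr = 0"
    using assms(2)
    by (simp add: Gr_def xr_def vec_eq_iff matrix_vector_mult_def flip: of_int_mult of_int_sum)
  ultimately have "xr = 0"
    using matrix_left_invertible_ker by blast
  then show ?thesis
    by (simp add: xr_def vec_eq_iff)
qed

lemma nondegenerate_pairs_nontrivially:
  assumes "intersection_pairing B" and "nondegenerate B" and "v \<noteq> 0"
  shows "\<exists>y. B v y \<noteq> 0"
proof (rule ccontr)
  assume "\<not> (\<exists>y. B v y \<noteq> 0)"
  then have "gram_matrix B *v v = 0"
    by (simp add: vec_eq_iff flip: intersection_pairing_axis_eq_gram[OF assms(1)])
  then show False
    using int_matrix_kernel_trivial assms(2,3) nondegenerate_def by blast
qed

lemma exists_negative_square:
  assumes "intersection_pairing B" and "nondegenerate B" and "\<not> positive_definite B"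
  obtains v where "B v v < 0"
proof -
  obtain v where "v \<noteq> 0" and "B v v \<le> 0"
    using assms(3) unfolding positive_definite_def by force
  show ?thesis
  proof (cases "B v v < 0")
    case True
    then show ?thesis using that by blast
  next
    case False
    with \<open>B v v \<le> 0\<close> have isotropic: "B v v = 0" by simp
    obtain y where "B v y \<noteq> 0"
      using nondegenerate_pairs_nontrivially[OF assms(1,2) \<open>v \<noteq> 0\<close>] by blast
    define m where "m = - sgn (B v y) * (\<bar>B y y\<bar> + 1)"
    have "m * B v y = - (\<bar>B v y\<bar> * (\<bar>B y y\<bar> + 1))"
      unfolding m_def by (simp add: abs_sgn algebra_simps)
    moreover have "\<bar>B y y\<bar> + 1 \<le> \<bar>B v y\<bar> * (\<bar>B y y\<bar> + 1)"
      using \<open>B v y \<noteq> 0\<close> by (intro mult_le_cancel_right1[THEN iffD2]) auto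
    moreover have "B y y \<le> \<bar>B y y\<bar>" by simp
    ultimately have "2 * (m * B v y) + B y y < 0" by linarith
    then have "B (m *s v + y) (m *s v + y) < 0"
      using intersection_pairing_square_expand[OF assms(1)] isotropic by (simp add: mult.assoc)
    then show ?thesis using that by blast
  qed
qed

lemma exists_odd_negative_square:
  assumes "intersection_pairing B" and "B v v < 0" and "odd (B x x)"
  obtains w where "B w w < 0" and "odd (B w w)"
proof -
  define m where "m = \<bar>B x x\<bar> + \<bar>B v x\<bar> + 1"
  have m_pos: "m \<ge> 1" unfolding m_def by simp
  have square: "B ((2 * m) *s v + x) ((2 * m) *s v + x) = 4 * (m\<^sup>2 * B v v + m * B v x) + B x x"
    using intersection_pairing_square_expand[OF assms(1)] by (simp add: algebra_simps)
  have "m\<^sup>2 * B v v \<le> - m\<^sup>2"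
    using mult_left_mono[of "B v v" "-1" "m\<^sup>2"] assms(2) by simp
  moreover have "m * B v x \<le> m * \<bar>B v x\<bar>"
    using m_pos by (intro mult_left_mono) auto
  moreover have "m * (\<bar>B x x\<bar> + 1) \<ge> \<bar>B x x\<bar> + 1"
    using m_pos by (simp add: mult_le_cancel_right1)
  moreover have "- m\<^sup>2 + m * \<bar>B v x\<bar> = - (m * (\<bar>B x x\<bar> + 1))"
    unfolding m_def by (simp add: power2_eq_square algebra_simps)
  moreover have "B x x \<le> \<bar>B x x\<bar>" by simp
  ultimately have "4 * (m\<^sup>2 * B v v + m * B v x) + B x x < 0" by (smt (verit))
  moreover have "odd (4 * (m\<^sup>2 * B v v + m * B v x) + B x x)"
    using assms(3) by simp
  ultimately show ?thesis
    using that square by metis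
qed

lemma ordinary_double:
  assumes "intersection_pairing B" and "odd_type B"
  shows "ordinary B (2 *s w)"
proof -
  obtain x where "odd (B x x)"
    using assms(2) unfolding odd_type_def by blast
  moreover have "even (B (2 *s w) x)"
    by (simp add: intersection_pairing_scale_left[OF assms(1)])
  ultimately have "B (2 *s w) x mod 2 \<noteq> B x x mod 2"
    by presburger
  then show ?thesis
    unfolding ordinary_def characteristic_def by blast
qed

lemma mod_8_eq_3_neq_four_pow_mult_8_plus_7:
  fixes k :: int
  assumes "k mod 8 = 3"
  shows "k \<noteq> 4 ^ a * (8 * b + 7)"
proof (cases a)
  case 0
  then show ?thesis using assms by simp presburger
next
  case (Suc a')
  then have "4 ^ a * (8 * b + 7) = 4 * (4 ^ a' * (8 * b + 7))" by simp
  then show ?thesis using assms by presburger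
qed

theorem mainTheorem6:
  fixes B :: "int^'n \<Rightarrow> int^'n \<Rightarrow> int"
  assumes "intersection_pairing B"
    and "nondegenerate B"
    and "odd_type B"
    and "\<not> positive_definite B"
  shows "\<exists>u (n::int). B u u = - n \<and> n > 0 \<and> ordinary B u \<and> (\<exists>w. u = 2 *s w) \<and>
           \<not> (\<exists>a b :: nat. n - 1 = 4 ^ a * (8 * int b + 7))"
proof -
  obtain v where "B v v < 0"
    using exists_negative_square[OF assms(1,2,4)] by blast
  moreover obtain x where "odd (B x x)"
    using assms(3) unfolding odd_type_def by blast
  ultimately obtain w where w: "B w w < 0" "odd (B w w)"
    using exists_odd_negative_square[OF assms(1)] by blast
  define n where "n = - 4 * B w w"
  have "B (2 *s w) (2 *s w) = - n"
    unfolding n_def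
    using assms(1) by (simp add: intersection_pairing_scale_left intersection_pairing_scale_right)
  moreover have "n > 0"
    unfolding n_def using w(1) by simp
  moreover have "(n - 1) mod 8 = 3"
    unfolding n_def using w(2) by presburger
  ultimately show ?thesis
    using ordinary_double[OF assms(1,3)]
      mod_8_eq_3_neq_four_pow_mult_8_plus_7[of "n - 1"] by blast
qed

end
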